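(* Let $A\in\mathbb{R}^{m\times n}$, $b\in\mathbb{R}^m$ with $Ax=b$ consistent, and let $\{x^k\}_{k\ge0}$, $\{p_k\}_{k\ge0}$, $\{\delta_k\}$, $\{\eta_k^i\}$, $\{S_k\}$ be generated by the IS-Krylov algorithm described in the context, with $r^k=Ax^k-b$ and $j_k=\max\{k-\ell+1,0\}$. Then for any integers $t,v,k$ with $j_k\le t<v\le k$: (i) $\langle p_v,p_t\rangle=0$; (ii) $\langle S_t^\top r^v,S_t^\top r^t\rangle=0$ if $v=t+1$ or $j_k=j_t$, and otherwise $$\langle S_t^\top r^v,S_t^\top r^t\rangle=-\sum_{w=t}^{v-1}\sum_{i=j_t}^{j_k-1}\delta_w\eta_t^i\langle p_w,p_i\rangle.$$
   Context: IS-Krylov algorithm: given a probability space $(\Omega,\mathcal{F},\mathbf{P})$ of matrices in $\mathbb{R}^{m\times q}$, a positive integer $\ell$ and $x^0\in\operatorname{Range}(A^\top)$: draw $S_0\in\Omega$ (redrawing until $S_0^\top(Ax^0-b)\neq0$), set $p_0=d_0=-A^\top S_0S_0^\top(Ax^0-b)$; for $k=0,1,\dots$: $\delta_k=\|S_k^\top(Ax^k-b)\|_2^2/\|p_k\|_2^2$; $x^{k+1}=x^k+\delta_kp_k$; draw $S_{k+1}\in\Omega$ (redrawing until $S_{k+1}^\top(Ax^{k+1}-b)\neq0$); with $j_{k+1}=\max\{k-\ell+2,0\}$ set $d_{k+1}=-A^\top S_{k+1}S_{k+1}^\top(Ax^{k+1}-b)$, $\eta_{k+1}^i=\langle d_{k+1},p_i\rangle/\|p_i\|_2^2$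 for $i=j_{k+1},\dots,k$, and $p_{k+1}=d_{k+1}-\sum_{i=j_{k+1}}^k\eta_{k+1}^ip_i$. Empty sums are zero. *)

theory Defs
  imports "HOL-Analysis.Analysis"
begin

definition jidx :: "nat \<Rightarrow> nat \<Rightarrow> nat" where
  "jidx l k = nat (max (int k - int l + 1) 0)"

definition resid :: "real^'n^'m \<Rightarrow> real^'m \<Rightarrow> real^'n \<Rightarrow> real^'m" where
  "resid A b y = A *v y - b"

text \<open>The redrawing rule means that
  each accepted S k satisfies S_k^T r^k \<noteq> 0.\<close>
definition IS_Krylov ::
  "real^'n^'m \<Rightarrow> real^'m \<Rightarrow> (real^'q^'m) set \<Rightarrow> nat \<Rightarrow> (nat \<Rightarrow> real^'q^'m)
   \<Rightarrow> (nat \<Rightarrow> real^'n) \<Rightarrow> (nat \<Rightarrow> real^'n) \<Rightarrow> (nat \<Rightarrow> real^'n)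
   \<Rightarrow> (nat \<Rightarrow> real) \<Rightarrow> (nat \<Rightarrow> nat \<Rightarrow> real) \<Rightarrow> bool" where
  "IS_Krylov A b \<Omega> l S x p d \<delta> \<eta> \<longleftrightarrow>
     x 0 \<in> range (\<lambda>y. transpose A *v y) \<and>
     (\<forall>k. S k \<in> \<Omega>) \<and>
     (\<forall>k. transpose (S k) *v resid A b (x k) \<noteq> 0) \<and>
     (\<forall>k. d k = - (transpose A *v (S k *v (transpose (S k) *v resid A b (x k))))) \<and>
     p 0 = d 0 \<and>
     (\<forall>k. \<delta> k = (norm (transpose (S k) *v resid A b (x k)))\<^sup>2 / (norm (p k))\<^sup>2) \<and>
     (\<forall>k. x (Suc k) = x k + \<delta> k *\<^sub>R p k) \<and>
     (\<forall>k. \<forall>i\<in>{jidx l (Suc k)..k}. \<eta> (Suc k) i = (d (Suc k) \<bullet> p i) / (norm (p i))\<^sup>2) \<and>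
     (\<forall>k. p (Suc k) = d (Suc k) - (\<Sum>i\<in>{jidx l (Suc k)..k}. \<eta> (Suc k) i *\<^sub>R p i))"

end

theory Submission
  imports Defs
begin

text \<open>The directions p form a Gram--Schmidt orthogonalisation of the sketched gradients d
  truncated to a sliding window, so each p v is orthogonal to the directions inside its window;
  by monotonicity of the windows this makes all directions inside one window pairwise orthogonal.
  Consequently p t points downhill towards every solution z with
  p t \<bullet> (x t - z) = - \<parallel>S_t^T r^t\<parallel>^2, which makes the step length \<delta> t exactly cancel
  the sketched residual along p t. Expanding r^v = r^t + \<Sum> \<delta>_w A p_w and d t in terms of
  the directions then leaves only the contributions of the directions that are in the window of t
  but not in the window of k.\<close>

lemma iterate_sum:
  fixes x p :: "nat \<Rightarrow> 'a::real_vector"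
  assumes step: "\<And>k. x (Suc k) = x k + \<delta> k *\<^sub>R p k" and "t \<le> v"
  shows "x v = x t + (\<Sum>u\<in>{t..<v}. \<delta> u *\<^sub>R p u)"
proof -
  have "x v - x t = (\<Sum>u\<in>{t..<v}. x (Suc u) - x u)"
    using sum_Suc_diff'[OF \<open>t \<le> v\<close>, of x] by simp
  also have "\<dots> = (\<Sum>u\<in>{t..<v}. \<delta> u *\<^sub>R p u)"
    using step by simp
  finally show ?thesis by (simp add: algebra_simps)
qed

lemma mono_jidx: "mono (jidx l)"
  unfolding jidx_def by (rule monoI) auto

locale truncated_gram_schmidt =
  fixes j :: "nat \<Rightarrow> nat" and d p :: "nat \<Rightarrow> 'a::real_inner" and \<eta> :: "nat \<Rightarrow> nat \<Rightarrow> real"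
  assumes mono_window: "mono j"
    and p_eq: "p v = d v - (\<Sum>i\<in>{j v..<v}. \<eta> v i *\<^sub>R p i)"
    and eta_eq: "i \<in> {j v..<v} \<Longrightarrow> \<eta> v i = (d v \<bullet> p i) / (norm (p i))\<^sup>2"
begin

lemma d_eq: "d v = p v + (\<Sum>i\<in>{j v..<v}. \<eta> v i *\<^sub>R p i)"
  using p_eq[of v] by (simp add: algebra_simps)

lemma p_orthogonal: "j v \<le> t \<Longrightarrow> t < v \<Longrightarrow> p v \<bullet> p t = 0"
proof (induction v arbitrary: t rule: less_induct)
  case (less v)
  have others: "\<eta> v i * (p i \<bullet> p t) = 0" if i: "i \<in> {j v..<v} - {t}" for i
  proof (cases "i < t")
    case True
    have "j t \<le> j v" using less.prems mono_window by (simp add: monoD)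
    then show ?thesis using less.IH[of t i] less.prems True i by (simp add: inner_commute)
  next
    case False
    have "j i \<le> j v" using i mono_window by (simp add: monoD)
    then show ?thesis using less.IH[of i t] less.prems False i by auto
  qed
  have t_in: "t \<in> {j v..<v}" using less.prems by simp
  have "p v \<bullet> p t = d v \<bullet> p t - (\<Sum>i\<in>{j v..<v}. \<eta> v i * (p i \<bullet> p t))"
    by (subst p_eq) (simp add: inner_diff_left inner_sum_left)
  also have "\<dots> = d v \<bullet> p t - \<eta> v t * (p t \<bullet> p t)"
    using others t_in by (simp add: sum.remove[OF finite_atLeastLessThan t_in] sum.neutral)
  also have "\<dots> = 0"
    using eta_eq[OF t_in] by (simp add: power2_norm_eq_inner)
  finally show ?case .
qed

lemma p_orthogonal_window: "j k \<le> t \<Longrightarrow> t < v \<Longrightarrow> v \<le> k \<Longrightarrow> p v \<bullet> p t = 0"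
  using p_orthogonal mono_window by (meson le_trans monoD)

lemma sum_inner_p_window:
  assumes "j k \<le> t" "t < v" "v \<le> k"
  shows "(\<Sum>w\<in>{t..<v}. f w * (p t \<bullet> p w)) = f t * (p t \<bullet> p t)"
proof -
  have "p t \<bullet> p w = 0" if "w \<in> {t..<v} - {t}" for w
    using p_orthogonal_window[of k t w] that assms by (simp add: inner_commute)
  then show ?thesis
    using assms by (simp add: sum.remove[of "{t..<v}" t] sum.neutral)
qed

lemma d_inner_p:
  assumes "j k \<le> t" "t \<le> w" "w \<le> k"
  shows "d t \<bullet> p w = p t \<bullet> p w + (\<Sum>i\<in>{j t..<j k}. \<eta> t i * (p w \<bullet> p i))"
proof -
  have "j t \<le> j k" using assms mono_window by (simp add: monoD)
  then have split: "{j t..<t} = {j t..<j k} \<union> {j k..<t}"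
    using assms by auto
  have "p i \<bullet> p w = 0" if "i \<in> {j k..<t}" for i
    using p_orthogonal_window[of k i w] that assms by (simp add: inner_commute)
  then have "(\<Sum>i\<in>{j t..<t}. \<eta> t i * (p i \<bullet> p w)) = (\<Sum>i\<in>{j t..<j k}. \<eta> t i * (p i \<bullet> p w))"
    by (simp add: split sum.union_disjoint)
  moreover have "d t \<bullet> p w = p t \<bullet> p w + (\<Sum>i\<in>{j t..<t}. \<eta> t i * (p i \<bullet> p w))"
    by (subst d_eq) (simp only: inner_add_left inner_sum_left inner_scaleR_left)
  ultimately show ?thesis
    by (simp add: inner_commute)
qed

lemma sum_d_inner_p:
  assumes "j k \<le> t" "t < v" "v \<le> k"
  shows "(\<Sum>w\<in>{t..<v}. f w * (d t \<bullet> p w)) = f t * (p t \<bullet> p t) +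
    (\<Sum>w\<in>{t..<v}. \<Sum>i\<in>{j t..<j k}. f w * \<eta> t i * (p w \<bullet> p i))"
proof -
  have "(\<Sum>w\<in>{t..<v}. f w * (d t \<bullet> p w)) =
      (\<Sum>w\<in>{t..<v}. f w * (p t \<bullet> p w)) + (\<Sum>w\<in>{t..<v}. \<Sum>i\<in>{j t..<j k}. f w * \<eta> t i * (p w \<bullet> p i))"
    using assms by (simp add: d_inner_p distrib_left sum.distrib sum_distrib_left mult.assoc)
  then show ?thesis
    using sum_inner_p_window[OF assms] by simp
qed

lemma window_sum_eq_0:
  assumes "j k \<le> t" "t < v" "v \<le> k" and "v = Suc t \<or> j k = j t"
  shows "(\<Sum>w\<in>{t..<v}. \<Sum>i\<in>{j t..<j k}. f w * \<eta> t i * (p w \<bullet> p i)) = 0"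
proof (cases "j k = j t")
  case False
  then have "v = Suc t" using assms by simp
  moreover have "p t \<bullet> p i = 0" if "i \<in> {j t..<j k}" for i
    using p_orthogonal[of t i] that assms by simp
  ultimately show ?thesis by simp
qed simp

end

text \<open>Here c k plays the role of \<parallel>S_k^T r^k\<parallel>^2 and z of a solution of A z = b.\<close>

locale truncated_gram_schmidt_iteration = truncated_gram_schmidt j d p \<eta>
  for j :: "nat \<Rightarrow> nat" and d p :: "nat \<Rightarrow> 'a::real_inner" and \<eta> +
  fixes x :: "nat \<Rightarrow> 'a" and \<delta> c :: "nat \<Rightarrow> real" and z :: 'a
  assumes x_Suc: "x (Suc k) = x k + \<delta> k *\<^sub>R p k"
    and delta_eq: "\<delta> k = c k / (norm (p k))\<^sup>2"
    and c_pos: "c k > 0"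
    and d_descent: "d k \<bullet> (x k - z) = - c k"
begin

lemma p_descent: "p t \<noteq> 0 \<and> p t \<bullet> (x t - z) = - c t"
proof (induction t rule: less_induct)
  case (less t)
  have "p i \<bullet> (x t - z) = 0" if i: "i \<in> {j t..<t}" for i
  proof -
    have IH: "p i \<noteq> 0" "p i \<bullet> (x i - z) = - c i"
      using less.IH[of i] i by auto
    have "x t - z = (x i - z) + (\<Sum>u\<in>{i..<t}. \<delta> u *\<^sub>R p u)"
      using iterate_sum[of x \<delta> p i t] x_Suc i by simp
    then have "p i \<bullet> (x t - z) = p i \<bullet> (x i - z) + (\<Sum>u\<in>{i..<t}. \<delta> u * (p i \<bullet> p u))"
      by (simp only: inner_add_right inner_sum_right inner_scaleR_right)
    also have "\<dots> = - c i + \<delta> i * (p i \<bullet> p i)"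
      using IH(2) sum_inner_p_window[of t i t \<delta>] i by simp
    also have "\<delta> i * (p i \<bullet> p i) = c i"
      using IH(1) by (simp add: delta_eq power2_norm_eq_inner)
    finally show ?thesis by simp
  qed
  then have "p t \<bullet> (x t - z) = d t \<bullet> (x t - z)"
    by (subst p_eq) (simp add: inner_diff_left inner_sum_left)
  then show ?case
    using d_descent[of t] c_pos[of t] by auto
qed

lemma delta_times_inner_p: "\<delta> t * (p t \<bullet> p t) = c t"
  using p_descent[of t] by (simp add: delta_eq power2_norm_eq_inner)

end

lemma inner_transpose_mult: "(transpose M *v u) \<bullet> w = u \<bullet> (M *v w)"
  for M :: "real^'a^'b"
  by (metis dot_lmul_matrix transpose_transpose vector_transpose_matrix)

lemma matrix_vector_mult_sum: "finite I \<Longrightarrow> M *v (\<Sum>i\<in>I. f i) = (\<Sum>i\<in>I. M *v f i)"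
  for M :: "real^'n^'m"
  by (induction I rule: finite_induct) (auto simp: matrix_vector_right_distrib)

context
  fixes A :: "real^'n^'m" and b :: "real^'m" and \<Omega> :: "(real^'q^'m) set"
    and l :: nat and S :: "nat \<Rightarrow> real^'q^'m"
    and x p d :: "nat \<Rightarrow> real^'n" and \<delta> :: "nat \<Rightarrow> real" and \<eta> :: "nat \<Rightarrow> nat \<Rightarrow> real"
  assumes alg: "IS_Krylov A b \<Omega> l S x p d \<delta> \<eta>"
begin

lemma IS_Krylov_d_inner:
  "d k \<bullet> y = - ((transpose (S k) *v resid A b (x k)) \<bullet> (transpose (S k) *v (A *v y)))"
proof -
  have "d k = - (transpose A *v (S k *v (transpose (S k) *v resid A b (x k))))"
    using alg unfolding IS_Krylov_def by blast
  then have "d k \<bullet> y = - ((S k *v (transpose (S k) *v resid A b (x k))) \<bullet> (A *v y))"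
    by (simp only: inner_transpose_mult inner_minus_left)
  also have "\<dots> = - ((transpose (S k) *v resid A b (x k)) \<bullet> (transpose (S k) *v (A *v y)))"
    using inner_transpose_mult[of "transpose (S k)"] by (simp only: transpose_transpose)
  finally show ?thesis .
qed

lemma IS_Krylov_truncated_gram_schmidt_iteration:
  assumes z: "A *v z = b"
  shows "truncated_gram_schmidt_iteration (jidx l) d p \<eta> x \<delta>
    (\<lambda>k. (norm (transpose (S k) *v resid A b (x k)))\<^sup>2) z"
proof unfold_locales
  fix v i k
  show "mono (jidx l)" by (rule mono_jidx)
  show "p v = d v - (\<Sum>i\<in>{jidx l v..<v}. \<eta> v i *\<^sub>R p i)"
    using alg by (cases v) (simp_all add: IS_Krylov_def atLeastLessThanSuc_atLeastAtMost)
  show "i \<in> {jidx l v..<v} \<Longrightarrow> \<eta> v i = (d v \<bullet> p i) / (norm (p i))\<^sup>2"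
    using alg by (cases v) (simp_all add: IS_Krylov_def atLeastLessThanSuc_atLeastAtMost)
  show "x (Suc k) = x k + \<delta> k *\<^sub>R p k"
    "\<delta> k = (norm (transpose (S k) *v resid A b (x k)))\<^sup>2 / (norm (p k))\<^sup>2"
    "(norm (transpose (S k) *v resid A b (x k)))\<^sup>2 > 0"
    using alg by (simp_all add: IS_Krylov_def)
  have "A *v (x k - z) = resid A b (x k)"
    using z by (simp add: resid_def matrix_vector_mult_diff_distrib)
  then show "d k \<bullet> (x k - z) = - (norm (transpose (S k) *v resid A b (x k)))\<^sup>2"
    by (simp add: IS_Krylov_d_inner power2_norm_eq_inner)
qed

lemma IS_Krylov_sketched_residual_inner:
  assumes "t \<le> v"
  shows "(transpose (S t) *v resid A b (x v)) \<bullet> (transpose (S t) *v resid A b (x t)) =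
    (norm (transpose (S t) *v resid A b (x t)))\<^sup>2 - (\<Sum>w\<in>{t..<v}. \<delta> w * (d t \<bullet> p w))"
proof -
  define s where "s = transpose (S t) *v resid A b (x t)"
  have "x v = x t + (\<Sum>w\<in>{t..<v}. \<delta> w *\<^sub>R p w)"
    using iterate_sum[of x \<delta> p t v] alg assms by (simp add: IS_Krylov_def)
  then have "resid A b (x v) = resid A b (x t) + (\<Sum>w\<in>{t..<v}. \<delta> w *\<^sub>R (A *v p w))"
    by (simp add: resid_def matrix_vector_right_distrib matrix_vector_mult_sum
        matrix_vector_mult_scaleR algebra_simps)
  then have "transpose (S t) *v resid A b (x v) =
      s + (\<Sum>w\<in>{t..<v}. \<delta> w *\<^sub>R (transpose (S t) *v (A *v p w)))"
    by (simp only: s_def matrix_vector_right_distrib matrix_vector_mult_sum[OF finite_atLeastLessThan]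
        matrix_vector_mult_scaleR)
  then have "(transpose (S t) *v resid A b (x v)) \<bullet> s =
      s \<bullet> s + (\<Sum>w\<in>{t..<v}. \<delta> w * ((transpose (S t) *v (A *v p w)) \<bullet> s))"
    by (simp only: inner_add_left inner_sum_left inner_scaleR_left)
  also have "\<dots> = (norm s)\<^sup>2 - (\<Sum>w\<in>{t..<v}. \<delta> w * (d t \<bullet> p w))"
    by (simp add: IS_Krylov_d_inner s_def inner_commute power2_norm_eq_inner sum_negf)
  finally show ?thesis unfolding s_def .
qed

end

theorem proposition4p4:
  fixes A :: "real^'n^'m" and b :: "real^'m" and \<Omega> :: "(real^'q^'m) set"
    and l :: nat and S :: "nat \<Rightarrow> real^'q^'m"
    and x p d :: "nat \<Rightarrow> real^'n" and \<delta> :: "nat \<Rightarrow> real" and \<eta> :: "nat \<Rightarrow> nat \<Rightarrow> real"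
    and t v k :: nat
  assumes consistent: "\<exists>z. A *v z = b"
    and l_pos: "l \<ge> 1"
    and alg: "IS_Krylov A b \<Omega> l S x p d \<delta> \<eta>"
    and range: "jidx l k \<le> t" "t < v" "v \<le> k"
  shows "p v \<bullet> p t = 0 \<and>
    ((v = Suc t \<or> jidx l k = jidx l t) \<longrightarrow>
       (transpose (S t) *v resid A b (x v)) \<bullet> (transpose (S t) *v resid A b (x t)) = 0) \<and>
    (\<not> (v = Suc t \<or> jidx l k = jidx l t) \<longrightarrow>
       (transpose (S t) *v resid A b (x v)) \<bullet> (transpose (S t) *v resid A b (x t)) =
       - (\<Sum>w\<in>{t..<v}. \<Sum>i\<in>{jidx l t..<jidx l k}. \<delta> w * \<eta> t i * (p w \<bullet> p i)))"
proof -
  obtain z where "A *v z = b" using consistent by blast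
  then interpret truncated_gram_schmidt_iteration "jidx l" d p \<eta> x \<delta>
      "\<lambda>k. (norm (transpose (S k) *v resid A b (x k)))\<^sup>2" z
    by (rule IS_Krylov_truncated_gram_schmidt_iteration[OF alg])
  have "(transpose (S t) *v resid A b (x v)) \<bullet> (transpose (S t) *v resid A b (x t)) =
      - (\<Sum>w\<in>{t..<v}. \<Sum>i\<in>{jidx l t..<jidx l k}. \<delta> w * \<eta> t i * (p w \<bullet> p i))"
    using IS_Krylov_sketched_residual_inner[OF alg, of t v] sum_d_inner_p[OF range, of \<delta>]
      delta_times_inner_p[of t] range by simp
  then show ?thesis
    using p_orthogonal_window[OF range] window_sum_eq_0[OF range, of \<delta>] by auto
qed

end
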